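(* Let $k\ge 2$ and $i\in\{1,\ldots,k-1\}$. If $\binom{k}{i}$ is even, then $J(2k,k,i)$ does not admit perfect state transfer.
   Context: $J(2k,k,i)$ is the graph on the $k$-subsets of $\{1,\ldots,2k\}$ with $A\sim B$ iff $|A\cap B|=i$. For a simple graph $X$ with adjacency matrix $A$, let $\mathcal{H}_X(t)=e^{itA}$. $X$ admits perfect state transfer (PST) if $|\mathcal{H}_X(\tau)_{u,v}|=1$ for some vertices $u\ne v$ and some $\tau>0$. *)

theory Defs
  imports Complex_Main
begin

text \<open>A finite simple graph is given by a finite vertex set V and a symmetric
irreflexive adjacency relation E. Matrices indexed by V are functions
'a \<Rightarrow> 'a \<Rightarrow> complex (only entries on V matter).\<close>

definition adj_matrix :: "('a \<Rightarrow> 'a \<Rightarrow> bool) \<Rightarrow> 'a \<Rightarrow> 'a \<Rightarrow> complex" where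
  "adj_matrix E u v = (if E u v then 1 else 0)"

definition mat_mult :: "'a set \<Rightarrow> ('a \<Rightarrow> 'a \<Rightarrow> complex) \<Rightarrow> ('a \<Rightarrow> 'a \<Rightarrow> complex) \<Rightarrow> 'a \<Rightarrow> 'a \<Rightarrow> complex" where
  "mat_mult V M N u v = (\<Sum>w\<in>V. M u w * N w v)"

fun mat_pow :: "'a set \<Rightarrow> ('a \<Rightarrow> 'a \<Rightarrow> complex) \<Rightarrow> nat \<Rightarrow> 'a \<Rightarrow> 'a \<Rightarrow> complex" where
  "mat_pow V M 0 = (\<lambda>u v. if u = v then 1 else 0)"
| "mat_pow V M (Suc n) = mat_mult V (mat_pow V M n) M"

definition transition_matrix :: "'a set \<Rightarrow> ('a \<Rightarrow> 'a \<Rightarrow> bool) \<Rightarrow> real \<Rightarrow> 'a \<Rightarrow> 'a \<Rightarrow> complex" where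
  "transition_matrix V E t u v =
     (\<Sum>n. ((\<i> * complex_of_real t) ^ n / of_nat (fact n)) * mat_pow V (adj_matrix E) n u v)"

definition admits_PST :: "'a set \<Rightarrow> ('a \<Rightarrow> 'a \<Rightarrow> bool) \<Rightarrow> bool" where
  "admits_PST V E \<longleftrightarrow>
     (\<exists>u\<in>V. \<exists>v\<in>V. u \<noteq> v \<and> (\<exists>\<tau>>0. cmod (transition_matrix V E \<tau> u v) = 1))"

definition J_vertices :: "nat \<Rightarrow> nat \<Rightarrow> nat set set" where
  "J_vertices n k = {A. A \<subseteq> {1..n} \<and> card A = k}"

definition J_adj :: "nat \<Rightarrow> nat set \<Rightarrow> nat set \<Rightarrow> bool" where
  "J_adj i A B \<longleftrightarrow> A \<noteq> B \<and> card (A \<inter> B) = i"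

end

theory Submission
  imports Defs
begin

text \<open>Let \<gamma> = H(\<tau>)_(u,v) with |\<gamma>| = 1. Since H(\<tau>) is unitary, row u of H(\<tau>) is \<gamma> e_v, so
  every eigenvector f of A with eigenvalue \<theta> satisfies exp(i \<tau> \<theta>) f(u) = \<gamma> f(v). Write
  C = binom(k,i), a = binom(k-1,i), b = binom(k-1,i-1), so C = a + b. Three eigenvectors of J(2k,k,i)
  are used: the constant vector (eigenvalue C^2); for each point x the vector D \<mapsto> \<plusminus>1
  according to x \<in> D (eigenvalue C(b - a)), which forces v to be the complement of u and gives
  phase -\<gamma>; and the alternating product over a perfect matching between u and its complement
  (eigenvalue (-1)^(k-i) C), which is 1 at u and (-1)^k at v. For \<omega> = exp(i \<tau> C) this yields
  \<omega>^(2a) = -1 and \<omega>^(2d) = 1 with d = C - (-1)^(k-i), and d is odd when C is even.\<close>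

section \<open>The transition matrix\<close>

definition exp_coeff :: "real \<Rightarrow> nat \<Rightarrow> complex" where
  "exp_coeff t n = (\<i> * complex_of_real t) ^ n / of_nat (fact n)"

lemma transition_matrix_eq_suminf:
  "transition_matrix V E t u v = (\<Sum>n. exp_coeff t n * mat_pow V (adj_matrix E) n u v)"
  by (simp add: transition_matrix_def exp_coeff_def)

lemma norm_exp_coeff: "cmod (exp_coeff t n) = \<bar>t\<bar> ^ n / fact n"
  by (simp add: exp_coeff_def norm_divide norm_mult norm_power)

lemma exp_coeff_sums: "(\<lambda>n. exp_coeff t n * x ^ n) sums exp (\<i> * complex_of_real t * x)"
proof -
  have "(\<lambda>n. (\<i> * complex_of_real t * x) ^ n /\<^sub>R fact n) sums exp (\<i> * complex_of_real t * x)"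
    by (rule exp_converges)
  moreover have "(\<lambda>n. (\<i> * complex_of_real t * x) ^ n /\<^sub>R fact n) = (\<lambda>n. exp_coeff t n * x ^ n)"
    by (rule ext) (simp add: exp_coeff_def power_mult_distrib scaleR_conv_of_real divide_inverse)
  ultimately show ?thesis by simp
qed

lemma exp_coeff_Cauchy_product: "(\<Sum>n\<le>N. exp_coeff s n * exp_coeff t (N - n)) = exp_coeff (s + t) N"
proof -
  have "exp_coeff (s + t) N
      = (\<Sum>n\<le>N. of_nat (N choose n) * (\<i> * complex_of_real s) ^ n * (\<i> * complex_of_real t) ^ (N - n))
        / of_nat (fact N)"
    by (simp add: exp_coeff_def distrib_left binomial_ring)
  also have "\<dots> = (\<Sum>n\<le>N. exp_coeff s n * exp_coeff t (N - n))"
    unfolding sum_divide_distrib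
  proof (rule sum.cong[OF refl])
    fix n assume "n \<in> {..N}"
    then have "(of_nat (N choose n) :: complex) = fact N / (fact n * fact (N - n))"
      by (simp add: binomial_fact)
    then show "of_nat (N choose n) * (\<i> * complex_of_real s) ^ n * (\<i> * complex_of_real t) ^ (N - n)
        / of_nat (fact N) = exp_coeff s n * exp_coeff t (N - n)"
      by (simp add: exp_coeff_def)
  qed
  finally show ?thesis by simp
qed

lemma mat_pow_add:
  assumes "finite V" "u \<in> V" "v \<in> V"
  shows "mat_pow V M (n + m) u v = (\<Sum>w\<in>V. mat_pow V M n u w * mat_pow V M m w v)"
  using assms(3)
proof (induction m arbitrary: v)
  case 0
  have "(\<Sum>w\<in>V. mat_pow V M n u w * mat_pow V M 0 w v) = (\<Sum>w\<in>V. if w = v then mat_pow V M n u v else 0)"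
    by (rule sum.cong) auto
  then show ?case using 0 assms(1) by simp
next
  case (Suc m)
  have "mat_pow V M (n + Suc m) u v = (\<Sum>w\<in>V. (\<Sum>z\<in>V. mat_pow V M n u z * mat_pow V M m z w) * M w v)"
    using Suc.IH by (simp add: mat_mult_def)
  also have "\<dots> = (\<Sum>z\<in>V. \<Sum>w\<in>V. mat_pow V M n u z * (mat_pow V M m z w * M w v))"
    by (subst sum.swap) (simp add: sum_distrib_right mult.assoc)
  also have "\<dots> = (\<Sum>z\<in>V. mat_pow V M n u z * (\<Sum>w\<in>V. mat_pow V M m z w * M w v))"
    by (simp add: sum_distrib_left)
  finally show ?case by (simp add: mat_mult_def)
qed

lemma mat_pow_Suc_left:
  assumes "finite V" "u \<in> V" "v \<in> V"
  shows "mat_pow V M (Suc n) u v = (\<Sum>w\<in>V. M u w * mat_pow V M n w v)"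
proof -
  have "mat_pow V M (Suc 0) u w = (\<Sum>z\<in>V. if u = z then M z w else 0)" for w
    unfolding mat_pow.simps mat_mult_def by (rule sum.cong) auto
  then have "mat_pow V M (Suc 0) u w = M u w" for w
    using assms(1,2) by simp
  then show ?thesis
    using mat_pow_add[OF assms, of M "Suc 0" n] by simp
qed

lemma mat_pow_symmetric:
  assumes "finite V" "u \<in> V" "v \<in> V" "\<And>x y. x \<in> V \<Longrightarrow> y \<in> V \<Longrightarrow> M x y = M y x"
  shows "mat_pow V M n u v = mat_pow V M n v u"
  using assms(2,3)
proof (induction n arbitrary: u v)
  case 0 then show ?case by simp
next
  case (Suc n)
  have "mat_pow V M (Suc n) u v = (\<Sum>w\<in>V. M v w * mat_pow V M n w u)"
    by (simp add: mat_mult_def) (use Suc assms(4) in \<open>auto simp: mult.commute intro: sum.cong\<close>)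
  also have "\<dots> = mat_pow V M (Suc n) v u"
    by (rule mat_pow_Suc_left[symmetric]) (use assms Suc in auto)
  finally show ?case .
qed

lemma cnj_adj_matrix: "cnj (adj_matrix E u v) = adj_matrix E u v"
  by (simp add: adj_matrix_def)

lemma cnj_mat_pow_adj_matrix: "cnj (mat_pow V (adj_matrix E) n u v) = mat_pow V (adj_matrix E) n u v"
  by (induction n arbitrary: v) (simp_all add: mat_mult_def cnj_adj_matrix)

lemma norm_mat_pow_adj_matrix_le:
  assumes "finite V"
  shows "cmod (mat_pow V (adj_matrix E) n u v) \<le> real (card V) ^ n"
proof (induction n arbitrary: v)
  case 0 then show ?case by simp
next
  case (Suc n)
  have "cmod (mat_pow V (adj_matrix E) (Suc n) u v)
     \<le> (\<Sum>w\<in>V. cmod (mat_pow V (adj_matrix E) n u w) * cmod (adj_matrix E w v))"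
    unfolding mat_pow.simps mat_mult_def by (rule order_trans[OF norm_sum]) (simp add: norm_mult)
  also have "\<dots> \<le> (\<Sum>w\<in>V. real (card V) ^ n)"
    by (intro sum_mono order_trans[OF mult_right_le_one_le Suc.IH]) (auto simp: adj_matrix_def)
  finally show ?case by simp
qed

lemma summable_norm_transition_series:
  assumes "finite V"
  shows "summable (\<lambda>n. norm (exp_coeff t n * mat_pow V (adj_matrix E) n u v))"
proof (rule summable_comparison_test[OF _ summable_exp[of "\<bar>t\<bar> * real (card V)"]])
  have "norm (exp_coeff t n * mat_pow V (adj_matrix E) n u v)
      \<le> \<bar>t\<bar> ^ n / fact n * real (card V) ^ n" for n
    unfolding norm_mult norm_exp_coeff
    by (rule mult_left_mono) (use norm_mat_pow_adj_matrix_le[OF assms] in auto)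
  then show "\<exists>N. \<forall>n\<ge>N. norm (norm (exp_coeff t n * mat_pow V (adj_matrix E) n u v))
      \<le> inverse (fact n) * (\<bar>t\<bar> * real (card V)) ^ n"
    by (simp add: power_mult_distrib field_simps)
qed

lemma transition_series_sums:
  assumes "finite V"
  shows "(\<lambda>n. exp_coeff t n * mat_pow V (adj_matrix E) n u v) sums transition_matrix V E t u v"
  unfolding transition_matrix_eq_suminf
  by (rule summable_sums[OF summable_norm_cancel[OF summable_norm_transition_series[OF assms]]])

lemma mat_pow_eigenvector:
  assumes "finite V" "u \<in> V"
    and eig: "\<And>x. x \<in> V \<Longrightarrow> (\<Sum>w\<in>V. M x w * f w) = \<theta> * f x"
  shows "(\<Sum>w\<in>V. mat_pow V M n u w * f w) = \<theta> ^ n * f u"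
proof (induction n)
  case 0
  have "(\<Sum>w\<in>V. mat_pow V M 0 u w * f w) = (\<Sum>w\<in>V. if w = u then f u else 0)"
    by (rule sum.cong) auto
  then show ?case using assms by simp
next
  case (Suc n)
  have "(\<Sum>w\<in>V. mat_pow V M (Suc n) u w * f w) = (\<Sum>w\<in>V. \<Sum>z\<in>V. mat_pow V M n u z * (M z w * f w))"
    by (simp add: mat_mult_def sum_distrib_right mult.assoc)
  also have "\<dots> = (\<Sum>z\<in>V. mat_pow V M n u z * (\<Sum>w\<in>V. M z w * f w))"
    by (subst sum.swap) (simp add: sum_distrib_left)
  also have "\<dots> = \<theta> * (\<Sum>z\<in>V. mat_pow V M n u z * f z)"
    by (simp add: eig sum_distrib_left mult.left_commute)
  finally show ?case using Suc by simp
qed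

definition adj_eigenvector :: "'a set \<Rightarrow> ('a \<Rightarrow> 'a \<Rightarrow> bool) \<Rightarrow> complex \<Rightarrow> ('a \<Rightarrow> complex) \<Rightarrow> bool" where
  "adj_eigenvector V E \<theta> f \<longleftrightarrow> (\<forall>x\<in>V. (\<Sum>w\<in>V. adj_matrix E x w * f w) = \<theta> * f x)"

lemma transition_matrix_eigenvector:
  assumes "finite V" "u \<in> V" "adj_eigenvector V E \<theta> f"
  shows "(\<Sum>w\<in>V. transition_matrix V E t u w * f w) = exp (\<i> * complex_of_real t * \<theta>) * f u"
proof -
  have "(\<lambda>n. \<Sum>w\<in>V. exp_coeff t n * mat_pow V (adj_matrix E) n u w * f w)
      sums (\<Sum>w\<in>V. transition_matrix V E t u w * f w)"
    by (intro sums_sum sums_mult2 transition_series_sums assms(1))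
  moreover have "(\<lambda>n. \<Sum>w\<in>V. exp_coeff t n * mat_pow V (adj_matrix E) n u w * f w)
      = (\<lambda>n. exp_coeff t n * \<theta> ^ n * f u)"
    using mat_pow_eigenvector[OF assms(1,2), of "adj_matrix E" f \<theta>] assms(3)
    by (simp add: adj_eigenvector_def sum_distrib_left[symmetric] mult.assoc)
  moreover have "(\<lambda>n. exp_coeff t n * \<theta> ^ n * f u) sums (exp (\<i> * complex_of_real t * \<theta>) * f u)"
    by (rule sums_mult2[OF exp_coeff_sums])
  ultimately show ?thesis by (metis sums_unique2)
qed

lemma cnj_transition_matrix:
  assumes "finite V"
  shows "cnj (transition_matrix V E t u v) = transition_matrix V E (-t) u v"
proof -
  have "(\<lambda>n. cnj (exp_coeff t n * mat_pow V (adj_matrix E) n u v)) sums cnj (transition_matrix V E t u v)"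
    by (rule sums_cnj[THEN iffD2, OF transition_series_sums[OF assms]])
  moreover have "(\<lambda>n. cnj (exp_coeff t n * mat_pow V (adj_matrix E) n u v))
      = (\<lambda>n. exp_coeff (-t) n * mat_pow V (adj_matrix E) n u v)"
    by (simp add: cnj_mat_pow_adj_matrix exp_coeff_def)
  ultimately show ?thesis
    using transition_series_sums[OF assms] by (metis sums_unique2)
qed

lemma transition_matrix_symmetric:
  assumes "finite V" "u \<in> V" "v \<in> V" "\<And>x y. E x y = E y x"
  shows "transition_matrix V E t u v = transition_matrix V E t v u"
proof -
  have "mat_pow V (adj_matrix E) n u v = mat_pow V (adj_matrix E) n v u" for n
    by (rule mat_pow_symmetric) (use assms in \<open>auto simp: adj_matrix_def\<close>)
  then show ?thesis by (simp add: transition_matrix_eq_suminf)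
qed

lemma transition_matrix_add:
  assumes "finite V" "u \<in> V" "v \<in> V"
  shows "(\<Sum>w\<in>V. transition_matrix V E s u w * transition_matrix V E t w v)
    = transition_matrix V E (s + t) u v"
proof -
  let ?P = "mat_pow V (adj_matrix E)"
  have "(\<lambda>N. \<Sum>w\<in>V. \<Sum>n\<le>N. (exp_coeff s n * ?P n u w) * (exp_coeff t (N - n) * ?P (N - n) w v))
      sums (\<Sum>w\<in>V. transition_matrix V E s u w * transition_matrix V E t w v)"
    unfolding transition_matrix_eq_suminf
    by (intro sums_sum Cauchy_product_sums summable_norm_transition_series assms(1))
  moreover have "(\<Sum>w\<in>V. \<Sum>n\<le>N. (exp_coeff s n * ?P n u w) * (exp_coeff t (N - n) * ?P (N - n) w v))
      = exp_coeff (s + t) N * ?P N u v" for N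
  proof -
    have "(\<Sum>w\<in>V. \<Sum>n\<le>N. (exp_coeff s n * ?P n u w) * (exp_coeff t (N - n) * ?P (N - n) w v))
        = (\<Sum>n\<le>N. (exp_coeff s n * exp_coeff t (N - n)) * (\<Sum>w\<in>V. ?P n u w * ?P (N - n) w v))"
      by (subst sum.swap) (simp add: sum_distrib_left mult_ac)
    also have "\<dots> = (\<Sum>n\<le>N. exp_coeff s n * exp_coeff t (N - n)) * ?P N u v"
      by (simp add: sum_distrib_right mat_pow_add[OF assms, symmetric])
    finally show ?thesis by (simp add: exp_coeff_Cauchy_product)
  qed
  ultimately show ?thesis
    using transition_series_sums[OF assms(1)] by (metis (no_types, lifting) sums_unique2 ext)
qed

lemma transition_matrix_0_diagonal: "transition_matrix V E 0 u u = 1"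
proof -
  have "(\<lambda>n. exp_coeff 0 n * mat_pow V (adj_matrix E) n u u) = (\<lambda>n. if n = 0 then 1 else 0)"
    by (rule ext) (simp add: exp_coeff_def)
  then show ?thesis using sums_single[of 0 "\<lambda>_. 1::complex"] by (simp add: transition_matrix_eq_suminf sums_iff)
qed

text \<open>H(t) H(-t) = I, and H(-t) is the conjugate transpose of H(t) because A is real symmetric.\<close>
lemma transition_matrix_row_norm:
  assumes "finite V" "u \<in> V" "\<And>x y. E x y = E y x"
  shows "(\<Sum>w\<in>V. (cmod (transition_matrix V E t u w))\<^sup>2) = 1"
proof -
  have "complex_of_real (\<Sum>w\<in>V. (cmod (transition_matrix V E t u w))\<^sup>2)
      = (\<Sum>w\<in>V. transition_matrix V E t u w * transition_matrix V E (-t) w u)"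
    unfolding of_real_sum
  proof (rule sum.cong[OF refl])
    fix w assume "w \<in> V"
    then have "transition_matrix V E (-t) w u = transition_matrix V E (-t) u w"
      by (intro transition_matrix_symmetric assms)
    also have "\<dots> = cnj (transition_matrix V E t u w)"
      by (simp add: cnj_transition_matrix[OF assms(1)])
    finally have "transition_matrix V E (-t) w u = cnj (transition_matrix V E t u w)" .
    then show "complex_of_real ((cmod (transition_matrix V E t u w))\<^sup>2)
        = transition_matrix V E t u w * transition_matrix V E (-t) w u"
      using complex_norm_square[of "transition_matrix V E t u w"] by simp
  qed
  also have "\<dots> = 1"
    using transition_matrix_add[OF assms(1,2,2), of E t "-t"] transition_matrix_0_diagonal by simp
  finally show ?thesis by (metis of_real_eq_1_iff)
qed

lemma perfect_state_transfer_eigenvector: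
  assumes "finite V" "u \<in> V" "v \<in> V" "\<And>x y. E x y = E y x"
    and pst: "cmod (transition_matrix V E \<tau> u v) = 1"
    and eig: "adj_eigenvector V E \<theta> f"
  shows "exp (\<i> * complex_of_real \<tau> * \<theta>) * f u = transition_matrix V E \<tau> u v * f v"
proof -
  let ?H = "transition_matrix V E \<tau>"
  have "(cmod (?H u v))\<^sup>2 + (\<Sum>w\<in>V-{v}. (cmod (?H u w))\<^sup>2) = 1"
    using transition_matrix_row_norm[of V u E \<tau>, OF assms(1,2,4)]
    unfolding sum.remove[OF assms(1,3), of "\<lambda>w. (cmod (?H u w))\<^sup>2"] .
  then have "(\<Sum>w\<in>V-{v}. (cmod (?H u w))\<^sup>2) = 0"
    using pst by simp
  then have "\<forall>w\<in>V-{v}. ?H u w = 0"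
    using sum_nonneg_eq_0_iff[of "V - {v}" "\<lambda>w. (cmod (?H u w))\<^sup>2"] assms(1) by auto
  then have "(\<Sum>w\<in>V. ?H u w * f w) = ?H u v * f v"
    unfolding sum.remove[OF assms(1,3), of "\<lambda>w. ?H u w * f w"] by simp
  then show ?thesis
    using transition_matrix_eigenvector[OF assms(1,2) eig] by simp
qed

section \<open>Eigenvectors of J(2k,k,i)\<close>

lemma card_subsets_with_intersection:
  assumes "finite S" "B \<subseteq> S" "i \<le> k"
  shows "card {D. D \<subseteq> S \<and> card D = k \<and> card (D \<inter> B) = i}
    = (card B choose i) * (card (S - B) choose (k - i))"
proof -
  let ?X = "{X. X \<subseteq> B \<and> card X = i}" and ?Y = "{Y. Y \<subseteq> S - B \<and> card Y = k - i}"
  have fB: "finite B" by (rule finite_subset[OF assms(2,1)])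
  have "{D. D \<subseteq> S \<and> card D = k \<and> card (D \<inter> B) = i} = (\<lambda>(X, Y). X \<union> Y) ` (?X \<times> ?Y)"
  proof (rule set_eqI, rule iffI)
    fix D assume D: "D \<in> {D. D \<subseteq> S \<and> card D = k \<and> card (D \<inter> B) = i}"
    then have "finite D" using finite_subset[OF _ assms(1)] by blast
    then have "card (D - B) = k - i"
      using D card_Diff_subset_Int[of D B] by simp
    then show "D \<in> (\<lambda>(X, Y). X \<union> Y) ` (?X \<times> ?Y)"
      using D by (intro image_eqI[where x = "(D \<inter> B, D - B)"]) auto
  next
    fix D assume "D \<in> (\<lambda>(X, Y). X \<union> Y) ` (?X \<times> ?Y)"
    then obtain X Y where XY: "X \<in> ?X" "Y \<in> ?Y" "D = X \<union> Y" by auto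
    have "finite X" "finite Y" "X \<inter> Y = {}"
      using XY fB assms(1) by (auto intro: finite_subset)
    then have "card D = card X + card Y" using XY(3) card_Un_disjoint by simp
    moreover have "D \<inter> B = X" using XY by auto
    ultimately show "D \<in> {D. D \<subseteq> S \<and> card D = k \<and> card (D \<inter> B) = i}" using XY assms by auto
  qed
  moreover have "inj_on (\<lambda>(X, Y). X \<union> Y) (?X \<times> ?Y)"
    by (rule inj_onI) (clarsimp, blast)
  ultimately have "card {D. D \<subseteq> S \<and> card D = k \<and> card (D \<inter> B) = i} = card ?X * card ?Y"
    by (simp add: card_image card_cartesian_product)
  also have "\<dots> = (card B choose i) * (card (S - B) choose (k - i))"
    using n_subsets[OF fB, of i] n_subsets[of "S - B" "k - i"] assms(1) by simp
  finally show ?thesis .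
qed

definition J_neighbours :: "nat \<Rightarrow> nat \<Rightarrow> nat \<Rightarrow> nat set \<Rightarrow> nat set set" where
  "J_neighbours n k i B = {D \<in> J_vertices n k. card (D \<inter> B) = i}"

lemma finite_J_vertices: "finite (J_vertices n k)"
  by (rule finite_subset[of _ "Pow {1..n}"]) (auto simp: J_vertices_def)

lemma J_adj_commute: "J_adj i x y = J_adj i y x"
  by (auto simp: J_adj_def Int_commute)

lemma J_adj_row_sum:
  assumes "B \<in> J_vertices n k" "i < k"
  shows "(\<Sum>D\<in>J_vertices n k. adj_matrix (J_adj i) B D * f D) = (\<Sum>D\<in>J_neighbours n k i B. f D)"
proof -
  have "adj_matrix (J_adj i) B D * f D = (if card (D \<inter> B) = i then f D else 0)" for D
    using assms by (auto simp: adj_matrix_def J_adj_def J_vertices_def Int_commute)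
  then show ?thesis
    by (simp add: J_neighbours_def sum.inter_filter finite_J_vertices)
qed

lemma card_J_neighbours:
  assumes "B \<in> J_vertices (2 * k) k" "i \<le> k"
  shows "card (J_neighbours (2 * k) k i B) = (k choose i) * (k choose i)"
proof -
  have BS: "B \<subseteq> {1..2*k}" and cB: "card B = k" using assms by (auto simp: J_vertices_def)
  have "card ({1..2*k} - B) = k" using card_Diff_subset[OF finite_subset[OF BS] BS] cB by simp
  moreover have "J_neighbours (2 * k) k i B = {D. D \<subseteq> {1..2*k} \<and> card D = k \<and> card (D \<inter> B) = i}"
    by (auto simp: J_neighbours_def J_vertices_def)
  ultimately show ?thesis
    using card_subsets_with_intersection[OF _ BS assms(2)] cB binomial_symmetric[OF assms(2)] by simp
qed

lemma card_J_neighbours_avoiding: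
  assumes "B \<in> J_vertices (2 * k) k" "i \<le> k" "x \<in> {1..2*k}"
  shows "card {D \<in> J_neighbours (2 * k) k i B. x \<notin> D}
     = (if x \<in> B then (k - 1 choose i) * (k choose i) else (k choose i) * (k - 1 choose (k - i)))"
proof -
  let ?S = "{1..2*k} - {x}" and ?B = "B - {x}"
  have BS: "B \<subseteq> {1..2*k}" and cB: "card B = k" using assms by (auto simp: J_vertices_def)
  have fB: "finite B" using finite_subset[OF BS] by simp
  have "{D \<in> J_neighbours (2 * k) k i B. x \<notin> D} = {D. D \<subseteq> ?S \<and> card D = k \<and> card (D \<inter> ?B) = i}"
  proof (rule set_eqI, rule iffI)
    fix D assume D: "D \<in> {D \<in> J_neighbours (2 * k) k i B. x \<notin> D}"
    then have "D \<inter> ?B = D \<inter> B" "D \<subseteq> ?S" by (auto simp: J_neighbours_def J_vertices_def)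
    with D show "D \<in> {D. D \<subseteq> ?S \<and> card D = k \<and> card (D \<inter> ?B) = i}"
      by (simp add: J_neighbours_def J_vertices_def)
  next
    fix D assume D: "D \<in> {D. D \<subseteq> ?S \<and> card D = k \<and> card (D \<inter> ?B) = i}"
    then have "D \<inter> ?B = D \<inter> B" "D \<subseteq> {1..2*k}" "x \<notin> D" by auto
    with D show "D \<in> {D \<in> J_neighbours (2 * k) k i B. x \<notin> D}"
      by (simp add: J_neighbours_def J_vertices_def)
  qed
  moreover have "card (?S - ?B) = (if x \<in> B then k else k - 1)"
  proof -
    have "?S - ?B = ({1..2*k} - B) - {x}" by blast
    moreover have "card ({1..2*k} - B) = k" using card_Diff_subset[OF fB BS] cB by simp
    ultimately show ?thesis using assms(3) by (auto simp: card_Diff_singleton_if)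
  qed
  moreover have "card ?B = (if x \<in> B then k - 1 else k)" using cB fB by (simp add: card_Diff_singleton_if)
  moreover have "card {D. D \<subseteq> ?S \<and> card D = k \<and> card (D \<inter> ?B) = i}
      = (card ?B choose i) * (card (?S - ?B) choose (k - i))"
    by (rule card_subsets_with_intersection) (use BS assms(2) in auto)
  moreover have "(k choose (k - i)) = (k choose i)" using binomial_symmetric[OF assms(2)] by simp
  ultimately show ?thesis by (auto simp: mult.commute)
qed

lemma J_eigenvector_const:
  assumes "i < k"
  shows "adj_eigenvector (J_vertices (2 * k) k) (J_adj i) (of_nat ((k choose i) * (k choose i))) (\<lambda>_. 1)"
  unfolding adj_eigenvector_def
proof
  fix B assume B: "B \<in> J_vertices (2 * k) k"
  show "(\<Sum>D\<in>J_vertices (2 * k) k. adj_matrix (J_adj i) B D * 1) = of_nat ((k choose i) * (k choose i)) * 1"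
    using J_adj_row_sum[OF B assms, of "\<lambda>_. 1"] card_J_neighbours[OF B] assms by simp
qed

definition membership_sign :: "nat \<Rightarrow> nat set \<Rightarrow> complex" where
  "membership_sign x D = (if x \<in> D then 1 else -1)"

lemma J_eigenvector_membership_sign:
  assumes "1 \<le> i" "i < k" "x \<in> {1..2*k}"
  shows "adj_eigenvector (J_vertices (2 * k) k) (J_adj i)
    (of_nat (k choose i) * (of_nat (k - 1 choose (i - 1)) - of_nat (k - 1 choose i))) (membership_sign x)"
  unfolding adj_eigenvector_def
proof
  fix B assume B: "B \<in> J_vertices (2 * k) k"
  let ?N = "J_neighbours (2 * k) k i B"
  let ?C = "k choose i" and ?a = "k - 1 choose i" and ?b = "k - 1 choose (i - 1)"
  have "(\<Sum>D\<in>?N. membership_sign x D) = (\<Sum>D\<in>?N. 1 - (if x \<notin> D then 2 else 0))"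
    by (rule sum.cong) (auto simp: membership_sign_def)
  also have "\<dots> = of_nat (card ?N) - 2 * of_nat (card {D \<in> ?N. x \<notin> D})"
    by (simp add: sum_subtractf sum.inter_filter[symmetric] finite_J_vertices J_neighbours_def)
  finally have row: "(\<Sum>D\<in>?N. membership_sign x D) = of_nat (card ?N) - 2 * of_nat (card {D \<in> ?N. x \<notin> D})" .
  have Pascal: "?C = ?b + ?a"
    using assms by (simp add: choose_reduce_nat)
  have sym: "(k - 1 choose (k - i)) = ?b"
    using binomial_symmetric[of "i - 1" "k - 1"] assms by simp
  have "card ?N = ?C * ?C" using card_J_neighbours[OF B] assms by simp
  moreover have "card {D \<in> ?N. x \<notin> D} = (if x \<in> B then ?a * ?C else ?C * ?b)"
    using card_J_neighbours_avoiding[OF B _ assms(3)] assms sym by simp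
  ultimately show "(\<Sum>D\<in>J_vertices (2 * k) k. adj_matrix (J_adj i) B D * membership_sign x D)
      = of_nat ?C * (of_nat ?b - of_nat ?a) * membership_sign x B"
    unfolding J_adj_row_sum[OF B assms(2)] row Pascal
    by (simp add: membership_sign_def algebra_simps)
qed

locale complementary_matching =
  fixes k :: nat and U :: "nat set" and p :: "nat \<Rightarrow> nat"
  assumes U_subset: "U \<subseteq> {1..2*k}" and card_U: "card U = k"
    and bij_p: "bij_betw p U ({1..2*k} - U)"
begin

definition transversal :: "nat set \<Rightarrow> nat set" where
  "transversal T = T \<union> p ` (U - T)"

definition pattern_sign :: "nat set \<Rightarrow> complex" where
  "pattern_sign T = (\<Prod>y\<in>U. if y \<in> T then 1 else -1)"

text \<open>The coordinates, on k-sets, of the tensor product of the vectors e_y - e_(p y), y \<in> U.\<close>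
definition transversal_vector :: "nat set \<Rightarrow> complex" where
  "transversal_vector D = (\<Sum>T\<in>Pow U. if D = transversal T then pattern_sign T else 0)"

lemma finite_U: "finite U"
  using finite_subset[OF U_subset] by simp

lemma inj_on_p: "inj_on p U"
  using bij_p by (simp add: bij_betw_def)

lemma image_p: "p ` U = {1..2*k} - U"
  using bij_p by (simp add: bij_betw_def)

lemma transversal_Int_U: "T \<subseteq> U \<Longrightarrow> transversal T \<inter> U = T"
  unfolding transversal_def using image_p by blast

lemma transversal_in_J_vertices:
  assumes "T \<subseteq> U"
  shows "transversal T \<in> J_vertices (2*k) k"
proof -
  have fT: "finite T" using finite_subset[OF assms finite_U] .
  have "transversal T \<subseteq> {1..2*k}" unfolding transversal_def using assms U_subset image_p by blast
  moreover have "card (p ` (U - T)) = card (U - T)"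
    by (rule card_image) (rule inj_on_subset[OF inj_on_p], blast)
  moreover have "card (U - T) = k - card T" using card_Diff_subset[OF fT assms] card_U by simp
  moreover have "T \<inter> p ` (U - T) = {}" using assms image_p by blast
  moreover have "card T \<le> k" using card_mono[OF finite_U assms] card_U by simp
  ultimately show ?thesis
    unfolding transversal_def J_vertices_def using card_Un_disjoint[OF fT] finite_U by simp
qed

lemma transversal_vector_transversal:
  assumes "T0 \<subseteq> U"
  shows "transversal_vector (transversal T0) = pattern_sign T0"
proof -
  have "transversal T0 = transversal T \<longleftrightarrow> T = T0" if "T \<subseteq> U" for T
    using transversal_Int_U[OF that] transversal_Int_U[OF assms] by auto
  then have "transversal_vector (transversal T0) = (\<Sum>T\<in>Pow U. if T = T0 then pattern_sign T else 0)"
    unfolding transversal_vector_def by (intro sum.cong) auto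
  then show ?thesis using assms finite_U by simp
qed

lemma transversal_vector_U: "transversal_vector U = 1"
  using transversal_vector_transversal[of U] by (simp add: transversal_def pattern_sign_def)

lemma transversal_vector_complement: "transversal_vector ({1..2*k} - U) = (-1) ^ k"
  using transversal_vector_transversal[of "{}"] image_p card_U
  by (simp add: transversal_def pattern_sign_def)

lemma eq_transversal:
  assumes "B \<subseteq> {1..2*k}" "\<forall>x\<in>U. x \<in> B \<longleftrightarrow> p x \<notin> B"
  shows "B = transversal (B \<inter> U)"
proof
  show "B \<subseteq> transversal (B \<inter> U)"
  proof
    fix y assume y: "y \<in> B"
    show "y \<in> transversal (B \<inter> U)"
    proof (cases "y \<in> U")
      case True then show ?thesis using y unfolding transversal_def by blast
    next
      case False
      then obtain x where "x \<in> U" "y = p x" using image_p y assms(1) by blast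
      then show ?thesis using assms(2) y unfolding transversal_def by blast
    qed
  qed
  show "transversal (B \<inter> U) \<subseteq> B" unfolding transversal_def using assms(2) by blast
qed

lemma card_Int_transversal:
  assumes "T \<subseteq> U"
  shows "card (B \<inter> transversal T) = card {y\<in>U. if y \<in> T then y \<in> B else p y \<in> B}"
proof -
  have fT: "finite T" using finite_subset[OF assms finite_U] .
  have fP: "finite {y\<in>U - T. p y \<in> B}" using finite_U by simp
  have e1: "B \<inter> transversal T = (B \<inter> T) \<union> p ` {y\<in>U - T. p y \<in> B}"
    unfolding transversal_def by blast
  have d1: "(B \<inter> T) \<inter> p ` {y\<in>U - T. p y \<in> B} = {}" using assms image_p by blast
  have "card (p ` {y\<in>U - T. p y \<in> B}) = card {y\<in>U - T. p y \<in> B}"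
    by (rule card_image) (rule inj_on_subset[OF inj_on_p], blast)
  moreover have e2: "{y\<in>U. if y \<in> T then y \<in> B else p y \<in> B} = (B \<inter> T) \<union> {y\<in>U - T. p y \<in> B}"
    using assms by auto
  moreover have d2: "(B \<inter> T) \<inter> {y\<in>U - T. p y \<in> B} = {}" by blast
  ultimately show ?thesis
    unfolding e1 e2 using card_Un_disjoint[OF _ _ d1] card_Un_disjoint[OF _ fP d2] fT fP by simp
qed

lemma pattern_sign_flip:
  assumes "x \<in> U"
  shows "pattern_sign (if x \<in> T then T - {x} else insert x T) = - pattern_sign T"
proof -
  let ?T' = "if x \<in> T then T - {x} else insert x T"
  have "(\<Prod>y\<in>U - {x}. if y \<in> ?T' then 1 else -1) = (\<Prod>y\<in>U - {x}. if y \<in> T then 1 else (-1::complex))"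
    by (rule prod.cong) auto
  moreover have "pattern_sign S = (if x \<in> S then 1 else -1) * (\<Prod>y\<in>U - {x}. if y \<in> S then 1 else -1)" for S
    unfolding pattern_sign_def using prod.remove[OF finite_U assms] by blast
  ultimately show ?thesis by (cases "x \<in> T") simp_all
qed

lemma pattern_sign_symmetric_difference:
  assumes "T0 \<subseteq> U"
  shows "pattern_sign T = pattern_sign T0 * (-1) ^ card (U \<inter> ((T - T0) \<union> (T0 - T)))"
proof -
  let ?R = "(T - T0) \<union> (T0 - T)"
  have "pattern_sign T = (\<Prod>y\<in>U. (if y \<in> T0 then 1 else -1) * (if y \<in> ?R then -1 else (1::complex)))"
    unfolding pattern_sign_def by (rule prod.cong) auto
  also have "\<dots> = pattern_sign T0 * (\<Prod>y\<in>U. if y \<in> ?R then -1 else (1::complex))"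
    unfolding pattern_sign_def by (rule prod.distrib)
  also have "(\<Prod>y\<in>U. if y \<in> ?R then -1 else (1::complex)) = (-1) ^ card (U \<inter> ?R)"
    using prod.If_cases[OF finite_U, of "\<lambda>y. y \<in> ?R" "\<lambda>_. -1::complex" "\<lambda>_. 1"]
    by (simp add: Int_def)
  finally show ?thesis .
qed

text \<open>If B contains both or neither of x and p x, toggling x \<in> T is a sign-reversing involution.\<close>
lemma neighbour_sum_vanishes:
  assumes "x \<in> U" "x \<in> B \<longleftrightarrow> p x \<in> B"
  shows "(\<Sum>T\<in>Pow U. if card (B \<inter> transversal T) = i then pattern_sign T else 0) = 0"
proof -
  define flip where "flip T = (if x \<in> T then T - {x} else insert x T)" for T
  have flip_flip: "flip (flip T) = T" for T by (auto simp: flip_def)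
  have flip_subset: "flip T \<subseteq> U" if "T \<subseteq> U" for T using that assms(1) by (auto simp: flip_def)
  let ?\<phi> = "\<lambda>T. if card (B \<inter> transversal T) = i then pattern_sign T else 0"
  have "?\<phi> (flip T) = - ?\<phi> T" if "T \<subseteq> U" for T
  proof -
    have "card (B \<inter> transversal (flip T)) = card {y\<in>U. if y \<in> flip T then y \<in> B else p y \<in> B}"
      using flip_subset[OF that] by (simp add: card_Int_transversal)
    also have "{y\<in>U. if y \<in> flip T then y \<in> B else p y \<in> B} = {y\<in>U. if y \<in> T then y \<in> B else p y \<in> B}"
      using assms(2) by (auto simp: flip_def)
    also have "card \<dots> = card (B \<inter> transversal T)" using that by (simp add: card_Int_transversal)
    finally show ?thesis using pattern_sign_flip[OF assms(1)] by (simp add: flip_def)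
  qed
  moreover have "(\<Sum>T\<in>Pow U. ?\<phi> T) = (\<Sum>T\<in>Pow U. ?\<phi> (flip T))"
    by (rule sum.reindex_bij_witness[where i = flip and j = flip]) (simp_all add: flip_flip flip_subset)
  ultimately have "(\<Sum>T\<in>Pow U. ?\<phi> T) = - (\<Sum>T\<in>Pow U. ?\<phi> T)"
    by (simp add: sum_negf)
  then show ?thesis by simp
qed

lemma neighbour_sum_transversal:
  assumes "T0 \<subseteq> U" "i \<le> k"
  shows "(\<Sum>T\<in>Pow U. if card (transversal T0 \<inter> transversal T) = i then pattern_sign T else 0)
    = (-1) ^ (k - i) * of_nat (k choose i) * pattern_sign T0"
proof -
  let ?d = "\<lambda>T. (T - T0) \<union> (T0 - T)"
  have in_transversal: "y \<in> transversal T0 \<longleftrightarrow> y \<in> T0" "p y \<in> transversal T0 \<longleftrightarrow> y \<notin> T0"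
    if "y \<in> U" for y
    using transversal_Int_U[OF assms(1)] that image_p inj_on_image_mem_iff[OF inj_on_p that, of "U - T0"]
    unfolding transversal_def by blast+
  have card_meet: "card (transversal T0 \<inter> transversal T) = k - card (?d T)" if "T \<subseteq> U" for T
  proof -
    have "card (transversal T0 \<inter> transversal T)
        = card {y\<in>U. if y \<in> T then y \<in> transversal T0 else p y \<in> transversal T0}"
      by (rule card_Int_transversal[OF that])
    also have "{y\<in>U. if y \<in> T then y \<in> transversal T0 else p y \<in> transversal T0} = U - ?d T"
      using in_transversal by auto
    also have "card (U - ?d T) = k - card (?d T)"
      using card_Diff_subset[of "?d T" U] finite_subset[OF _ finite_U, of "?d T"] that assms(1) card_U by auto
    finally show ?thesis .
  qed
  let ?h = "\<lambda>R. if card R = k - i then (-1) ^ (k - i) * pattern_sign T0 else 0"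
  have "(\<Sum>T\<in>Pow U. if card (transversal T0 \<inter> transversal T) = i then pattern_sign T else 0)
      = (\<Sum>T\<in>Pow U. ?h (?d T))"
  proof (rule sum.cong[OF refl])
    fix T assume "T \<in> Pow U"
    then have "U \<inter> ?d T = ?d T" using assms(1) by blast
    moreover from this have "card (?d T) \<le> k"
      using card_mono[OF finite_U, of "?d T"] card_U by auto
    ultimately show "(if card (transversal T0 \<inter> transversal T) = i then pattern_sign T else 0) = ?h (?d T)"
      using \<open>T \<in> Pow U\<close> card_meet pattern_sign_symmetric_difference[OF assms(1), of T] assms
      by (auto simp: mult.commute)
  qed
  also have "\<dots> = (\<Sum>R\<in>Pow U. ?h R)"
    by (rule sum.reindex_bij_witness[where i = ?d and j = ?d]) (use assms(1) in auto)
  also have "\<dots> = of_nat (card {R\<in>Pow U. card R = k - i}) * ((-1) ^ (k - i) * pattern_sign T0)"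
    by (simp add: sum.If_cases finite_U Int_def)
  also have "card {R\<in>Pow U. card R = k - i} = k choose i"
    using n_subsets[OF finite_U, of "k - i"] card_U binomial_symmetric[OF assms(2)] by (simp add: Pow_def)
  finally show ?thesis by (simp add: mult_ac)
qed

lemma J_eigenvector_transversal_vector:
  assumes "i < k"
  shows "adj_eigenvector (J_vertices (2*k) k) (J_adj i) ((-1) ^ (k - i) * of_nat (k choose i)) transversal_vector"
  unfolding adj_eigenvector_def
proof
  fix B assume B: "B \<in> J_vertices (2*k) k"
  let ?N = "J_neighbours (2*k) k i B"
  have "(\<Sum>D\<in>J_vertices (2*k) k. adj_matrix (J_adj i) B D * transversal_vector D) = (\<Sum>D\<in>?N. transversal_vector D)"
    by (rule J_adj_row_sum[OF B assms])
  also have "\<dots> = (\<Sum>T\<in>Pow U. \<Sum>D\<in>?N. if D = transversal T then pattern_sign T else 0)"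
    unfolding transversal_vector_def by (rule sum.swap)
  also have "\<dots> = (\<Sum>T\<in>Pow U. if card (B \<inter> transversal T) = i then pattern_sign T else 0)"
    using transversal_in_J_vertices finite_J_vertices[of "2*k" k]
    by (intro sum.cong) (auto simp: J_neighbours_def Int_commute)
  also have "\<dots> = (-1) ^ (k - i) * of_nat (k choose i) * transversal_vector B"
  proof (cases "\<exists>T0\<in>Pow U. B = transversal T0")
    case True
    then show ?thesis using neighbour_sum_transversal transversal_vector_transversal assms by auto
  next
    case False
    then have "transversal_vector B = 0" by (simp add: transversal_vector_def)
    moreover have "\<exists>x\<in>U. x \<in> B \<longleftrightarrow> p x \<in> B"
      using False eq_transversal[of B] B by (auto simp: J_vertices_def)
    ultimately show ?thesis using neighbour_sum_vanishes by auto
  qed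
  finally show "(\<Sum>D\<in>J_vertices (2*k) k. adj_matrix (J_adj i) B D * transversal_vector D)
      = (-1) ^ (k - i) * of_nat (k choose i) * transversal_vector B" .
qed

end

lemma complementary_matching_exists:
  assumes "U \<in> J_vertices (2*k) k"
  obtains p where "complementary_matching k U p"
proof -
  have "U \<subseteq> {1..2*k}" "card U = k" using assms by (auto simp: J_vertices_def)
  moreover from this have "card ({1..2*k} - U) = k"
    using card_Diff_subset[OF finite_subset[of U "{1..2*k}"]] by simp
  ultimately obtain p where "bij_betw p U ({1..2*k} - U)"
    using finite_same_card_bij[of U "{1..2*k} - U"] finite_subset by auto
  then show ?thesis using that \<open>U \<subseteq> {1..2*k}\<close> \<open>card U = k\<close>
    by (simp add: complementary_matching_def)
qed

section \<open>Incompatible phases\<close>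

lemma antipodal_of_membership_phases:
  fixes \<gamma> \<eta> :: complex
  assumes "u \<in> J_vertices n k" "v \<in> J_vertices n k" "u \<noteq> v" "\<gamma> \<noteq> 0"
    and phase: "\<And>x. x \<in> {1..n} \<Longrightarrow> \<eta> * membership_sign x u = \<gamma> * membership_sign x v"
  shows "v = {1..n} - u" and "\<eta> = - \<gamma>"
proof -
  have u: "u \<subseteq> {1..n}" "card u = k" and v: "v \<subseteq> {1..n}" "card v = k"
    using assms(1,2) by (auto simp: J_vertices_def)
  have "\<not> u \<subseteq> v"
    using card_subset_eq[OF finite_subset[OF v(1)]] u v assms(3) by auto
  then obtain x where "x \<in> u" "x \<notin> v" by blast
  moreover from this have "x \<in> {1..n}" using u(1) by blast
  ultimately have \<eta>: "\<eta> = - \<gamma>" using phase[of x] by (simp add: membership_sign_def)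
  have "x \<in> v \<longleftrightarrow> x \<notin> u" if "x \<in> {1..n}" for x
    using phase[OF that] assms(4) by (auto simp: \<eta> membership_sign_def split: if_splits)
  then show "v = {1..n} - u" using v(1) by blast
  show "\<eta> = - \<gamma>" by (fact \<eta>)
qed

lemma odd_root_of_unity_power_neq_minus_one:
  fixes \<omega> :: "'a :: {comm_ring_1, ring_char_0}"
  assumes "\<omega> ^ (2 * a) = -1" "\<omega> ^ (2 * d) = 1" "odd d"
  shows False
proof -
  have "(-1 :: 'a) = (\<omega> ^ (2 * a)) ^ d" using assms(1,3) by simp
  also have "\<dots> = (\<omega> ^ (2 * d)) ^ a" by (simp flip: power_mult add: mult_ac)
  finally show False using assms(2) by simp
qed

lemma eigenvalue_phases_incompatible:
  fixes c \<gamma> :: complex and C a b m n :: nat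
  assumes "\<gamma> \<noteq> 0" "C = b + a" "even C"
    and E0: "exp (c * of_nat (C * C)) = \<gamma>"
    and E1: "exp (c * (of_nat C * (of_nat b - of_nat a))) = - \<gamma>"
    and E2: "exp (c * ((-1) ^ m * of_nat C)) = (-1) ^ n * \<gamma>"
  shows False
proof -
  define \<omega> where "\<omega> = exp (c * of_nat C)"
  have exp_split: "exp (c * \<theta>) = exp (c * \<theta>') * \<omega> ^ n" if "\<theta> = \<theta>' + of_nat (C * n)" for \<theta> \<theta>' n
    unfolding \<omega>_def that by (simp add: distrib_left exp_add exp_of_nat_mult[symmetric] mult_ac)
  have "\<gamma> = - \<gamma> * \<omega> ^ (2 * a)"
    using exp_split[of "of_nat (C * C)" "of_nat C * (of_nat b - of_nat a)" "2 * a"] E0 E1 assms(2)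
    by (simp add: algebra_simps)
  then have \<omega>a: "\<omega> ^ (2 * a) = -1" using assms(1)
    by (metis add.inverse_inverse mult_cancel_left1 mult_minus_left mult_minus_right)
  then have "0 < C" using assms(2) by (cases a) auto
  define d where "d = (if even m then C - 1 else C + 1)"
  have "\<gamma> = (-1) ^ n * \<gamma> * \<omega> ^ d"
    using exp_split[of "of_nat (C * C)" "(-1) ^ m * of_nat C" d] E0 E2 \<open>0 < C\<close>
    by (auto simp: d_def algebra_simps of_nat_diff)
  then have "(-1) ^ n * \<omega> ^ d = 1" using assms(1) by simp
  moreover have "\<omega> ^ (2 * d) = ((-1) ^ n * \<omega> ^ d)\<^sup>2"
    by (simp add: power_mult_distrib flip: power_mult) (simp add: mult.commute)
  ultimately have \<omega>d: "\<omega> ^ (2 * d) = 1" by simp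
  have "odd d" using \<open>0 < C\<close> assms(3) by (simp add: d_def)
  then show False using odd_root_of_unity_power_neq_minus_one[OF \<omega>a \<omega>d] by simp
qed

theorem mainTheorem6:
  fixes k i :: nat
  assumes "k \<ge> 2" and "1 \<le> i" and "i \<le> k - 1" and "even (k choose i)"
  shows "\<not> admits_PST (J_vertices (2 * k) k) (J_adj i)"
proof
  let ?V = "J_vertices (2 * k) k"
  assume "admits_PST ?V (J_adj i)"
  then obtain u v \<tau> where u: "u \<in> ?V" and v: "v \<in> ?V" and "u \<noteq> v"
    and pst: "cmod (transition_matrix ?V (J_adj i) \<tau> u v) = 1"
    unfolding admits_PST_def by blast
  define \<gamma> where "\<gamma> = transition_matrix ?V (J_adj i) \<tau> u v"
  define c where "c = \<i> * complex_of_real \<tau>"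
  have "\<gamma> \<noteq> 0" and ik: "1 \<le> i" "i < k" using pst assms by (auto simp: \<gamma>_def)
  have phase: "exp (c * \<theta>) * f u = \<gamma> * f v" if "adj_eigenvector ?V (J_adj i) \<theta> f" for \<theta> f
    using perfect_state_transfer_eigenvector[OF finite_J_vertices u v J_adj_commute pst that]
    by (simp add: \<gamma>_def c_def)
  note antipodal = antipodal_of_membership_phases[OF u v \<open>u \<noteq> v\<close> \<open>\<gamma> \<noteq> 0\<close>
      phase[OF J_eigenvector_membership_sign[OF ik]]]
  obtain p where "complementary_matching k u p"
    using complementary_matching_exists[OF u] .
  then interpret complementary_matching k u p .
  have "transversal_vector v = (-1) ^ k"
    using transversal_vector_complement by (simp only: antipodal(1))
  then have "exp (c * ((-1) ^ (k - i) * of_nat (k choose i))) = (-1) ^ k * \<gamma>"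
    using phase[OF J_eigenvector_transversal_vector[OF ik(2)]] by (simp add: transversal_vector_U)
  moreover have "k choose i = (k - 1 choose (i - 1)) + (k - 1 choose i)"
    using ik by (simp add: choose_reduce_nat)
  ultimately show False
    using eigenvalue_phases_incompatible[OF \<open>\<gamma> \<noteq> 0\<close> _ assms(4) _ antipodal(2)]
      phase[OF J_eigenvector_const[OF ik(2)]] by simp
qed

end
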